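(* $\mathrm{Sort}(\mathrm{SC}_{3\underline{21}})$ is a permutation class.
   Context: $\mathfrak S_n$ is the set of permutations of $\{1,\dots,n\}$. A permutation $\pi$ contains a (classical) permutation $\tau$ if some subsequence of $\pi$ has the same relative order as $\tau$. A permutation class is a set $\Pi$ of permutations such that every permutation contained in some $\pi\in\Pi$ is also in $\Pi$. A vincular pattern is a permutation with some entries underlined; a sequence contains it if it has a subsequence with the same relative order in which entries corresponding to adjacent underlined entries occupy consecutive positions. An occurrence of $3\underline{21}$ is $a_i a_j a_{j+1}$ with $i<j$ and $a_{j+1}<a_j<a_i$. For a pattern $\sigma$, the map $\mathrm{SC}_\sigma$ acts on $\tau$: read entries left to right; when the next entry $x$ is read, if pushing $x$ yields a stack whose entries read top to bottom (stack adjacency = consecutive positions) avoid $\sigma$, push $x$; otherwise pop the top stack entry to the output and repeat. At the end pop all remaining entries; the output is $\mathrm{SC}_\sigma(\tau)$. West's stack-sorting map is $s=\mathrm{SC}_{21}$. $\mathrm{Sort}_n(\mathrm{SC}_\sigma)=\{\tau\in\mathfrak S_n : s(\mathrm{SC}_\sigma(\tau))=12\cdots n\}$ and $\mathrm{Sort}(\mathrm{SC}_\sigma)=\bigcup_{n\ge1}\mathrm{Sort}_n(\mathrm{SC}_\sigma)$. *)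

theory Defs
  imports Main "HOL-Library.Sublist"
begin

text \<open>Permutations of {1..n} are represented as lists of naturals (one-line notation).\<close>

definition is_perm :: "nat list \<Rightarrow> bool" where
  "is_perm xs \<longleftrightarrow> distinct xs \<and> set xs = {1..length xs}"

definition perms :: "nat \<Rightarrow> nat list set" where
  "perms n = {xs. length xs = n \<and> is_perm xs}"

definition same_order :: "nat list \<Rightarrow> nat list \<Rightarrow> bool" where
  "same_order xs ys \<longleftrightarrow> length xs = length ys \<and>
     (\<forall>i<length xs. \<forall>j<length xs. (xs ! i < xs ! j) \<longleftrightarrow> (ys ! i < ys ! j))"

definition contains :: "nat list \<Rightarrow> nat list \<Rightarrow> bool" where
  "contains pi tau \<longleftrightarrow> (\<exists>ys. subseq ys pi \<and> same_order ys tau)"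

text \<open>Permutation classes. Permutations are nonempty (elements of S_n, n >= 1).\<close>
definition perm_class :: "nat list set \<Rightarrow> bool" where
  "perm_class P \<longleftrightarrow> (\<forall>pi\<in>P. is_perm pi \<and> pi \<noteq> []) \<and>
     (\<forall>pi\<in>P. \<forall>tau. is_perm tau \<and> tau \<noteq> [] \<and> contains pi tau \<longrightarrow> tau \<in> P)"

text \<open>A vincular pattern: a permutation p together with a set A of (0-based) positions i
  such that entries i and i+1 of p are underlined together (must be adjacent).\<close>
type_synonym vpattern = "nat list \<times> nat set"

definition vcontains :: "nat list \<Rightarrow> vpattern \<Rightarrow> bool" where
  "vcontains s sigma \<longleftrightarrow> (\<exists>idx. length idx = length (fst sigma) \<and> sorted_wrt (<) idx \<and>
     (\<forall>k\<in>set idx. k < length s) \<and> same_order (map ((!) s) idx) (fst sigma) \<and>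
     (\<forall>i\<in>snd sigma. Suc i < length idx \<longrightarrow> idx ! Suc i = Suc (idx ! i)))"

text \<open>The stack is a list with its top at the head,
  so the list itself reads the stack from top to bottom. Arguments: pattern, remaining input,
  stack, output so far. (Pushing onto the empty stack is always allowed; this agrees with the
  informal rule for every pattern of length at least 2.)\<close>
function sc_run :: "vpattern \<Rightarrow> nat list \<Rightarrow> nat list \<Rightarrow> nat list \<Rightarrow> nat list" where
  "sc_run sigma [] st out = out @ st"
| "sc_run sigma (x # xs) [] out = sc_run sigma xs [x] out"
| "sc_run sigma (x # xs) (y # st) out =
     (if \<not> vcontains (x # y # st) sigma then sc_run sigma xs (x # y # st) out
      else sc_run sigma (x # xs) st (out @ [y]))"
  by pat_completeness auto
termination
  by (relation "measure (\<lambda>(sigma, xs, st, out). 2 * length xs + length st)") auto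

definition SC :: "vpattern \<Rightarrow> nat list \<Rightarrow> nat list" where
  "SC sigma tau = sc_run sigma tau [] []"

definition west_s :: "nat list \<Rightarrow> nat list" where
  "west_s = SC ([2, 1], {})"

definition Sort_n :: "vpattern \<Rightarrow> nat \<Rightarrow> nat list set" where
  "Sort_n sigma n = {tau \<in> perms n. west_s (SC sigma tau) = [1..<Suc n]}"

definition Sort :: "vpattern \<Rightarrow> nat list set" where
  "Sort sigma = (\<Union>n\<in>{1..}. Sort_n sigma n)"

text \<open>The vincular pattern 3 underline{21}: entries at positions 1 and 2 (0-based) adjacent.\<close>
definition pat_3_21 :: vpattern where
  "pat_3_21 = ([3, 2, 1], {1})"

end

theory Submission
  imports Defs "HOL-Library.Multiset"
begin

text \<open>
  The sortable permutations are exactly those avoiding 123 and 132. The machine avoiding 3-21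
  pops only when the incoming entry is larger than a stack entry lying directly above a smaller
  one. So if the input has no adjacent ascent followed later by a larger entry (the vincular
  pattern 12-3 with 1 and 2 adjacent), the machine merely reverses it; otherwise a forced pop
  puts a 231 into its output. By Knuth's theorem West's map sorts a word iff the word avoids
  231, and 231 in the reverse is 132 in the original. Among 132-avoiding permutations, avoiding
  12-3 is the same as avoiding 123, and avoidance of 123 and 132 passes to contained
  permutations.
\<close>

definition pat_21 :: vpattern where
  "pat_21 = ([2, 1], {})"

definition has_231 :: "nat list \<Rightarrow> bool" where
  "has_231 w \<longleftrightarrow> (\<exists>a b c. subseq [b, c, a] w \<and> a < b \<and> b < c)"

definition has_12_3 :: "nat list \<Rightarrow> bool" where
  "has_12_3 w \<longleftrightarrow> (\<exists>u v x y z. w = u @ [x, y] @ v \<and> z \<in> set v \<and> x < y \<and> y < z)"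

text \<open>On lists of distinct entries this is avoidance of both 123 and 132.\<close>
definition avoids_123_132 :: "nat list \<Rightarrow> bool" where
  "avoids_123_132 w \<longleftrightarrow> \<not> (\<exists>a b c. subseq [a, b, c] w \<and> a < b \<and> a < c)"

lemma subseq_Cons_iff_split: "subseq (x # xs) w \<longleftrightarrow> (\<exists>p r. w = p @ x # r \<and> subseq xs r)"
  by (blast dest: list_emb_ConsD)

lemma subseq_pair_iff: "subseq [a, b] w \<longleftrightarrow> (\<exists>p q r. w = p @ a # q @ b # r)"
  unfolding subseq_Cons_iff_split[of a] subseq_singleton_left in_set_conv_decomp by blast

lemma subseq_triple_iff: "subseq [a, b, c] w \<longleftrightarrow> (\<exists>p q r s. w = p @ a # q @ b # r @ c # s)"
  unfolding subseq_Cons_iff_split[of a] subseq_pair_iff by blast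

lemma subseq_rev: "subseq xs ys \<Longrightarrow> subseq (rev xs) (rev ys)"
  by (induction rule: list_emb.induct) (auto simp: subseq_rev_drop_many)

lemma sorted_subseq_pair: "sorted w \<Longrightarrow> subseq [b, a] w \<Longrightarrow> b \<le> a"
  by (auto simp: subseq_pair_iff sorted_append)

lemma subseq_triple_nth:
  assumes "subseq [a, b, c] w"
  obtains i j k where "i < j" "j < k" "k < length w" "w ! i = a" "w ! j = b" "w ! k = c"
proof -
  from assms obtain p q r s where w: "w = p @ a # q @ b # r @ c # s"
    by (auto simp: subseq_triple_iff)
  let ?j = "length p + Suc (length q)"
  let ?k = "?j + Suc (length r)"
  have "w ! length p = a" "w ! ?j = b" "w ! ?k = c" "?k < length w"
    by (simp_all add: w nth_append)
  then show thesis
    by (intro that) simp_all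
qed

lemma nth_subseq_triple:
  assumes "i < j" "j < k" "k < length w"
  shows "subseq [w ! i, w ! j, w ! k] w"
proof -
  have drop_mono: "subseq ys (drop n w) \<Longrightarrow> m \<le> n \<Longrightarrow> subseq ys (drop m w)" for ys m n
    by (metis append_take_drop_id drop_drop le_add_diff_inverse2 subseq_drop_many)
  have Cons_drop: "subseq ys (drop (Suc n) w) \<Longrightarrow> n < length w \<Longrightarrow> subseq (w ! n # ys) (drop n w)"
    for ys n
    by (simp add: Cons_nth_drop_Suc[symmetric])
  have "subseq [w ! k] (drop k w)"
    using assms by (simp add: Cons_nth_drop_Suc[symmetric])
  then have "subseq [w ! j, w ! k] (drop j w)"
    by (rule Cons_drop[OF drop_mono]) (use assms in simp_all)
  then have "subseq [w ! i, w ! j, w ! k] (drop i w)"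
    by (rule Cons_drop[OF drop_mono]) (use assms in simp_all)
  then show ?thesis
    by (metis append_take_drop_id subseq_drop_many)
qed

section \<open>Containment of the two vincular patterns\<close>

lemma vcontains_21_iff_not_sorted: "vcontains s pat_21 \<longleftrightarrow> \<not> sorted s"
proof
  assume "vcontains s pat_21"
  then obtain i j where "i < j" "j < length s" "same_order [s ! i, s ! j] [2, 1]"
    by (auto simp: vcontains_def pat_21_def length_Suc_conv numeral_2_eq_2)
  then show "\<not> sorted s"
    by (auto simp: sorted_iff_nth_mono_less same_order_def All_less_Suc not_le)
next
  assume "\<not> sorted s"
  then obtain i j where ij: "i < j" "j < length s" "s ! j < s ! i"
    by (auto simp: sorted_iff_nth_mono_less not_le)
  then have "same_order [s ! i, s ! j] [2, 1]"
    by (simp add: same_order_def All_less_Suc)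
  with ij show "vcontains s pat_21"
    unfolding vcontains_def pat_21_def by (intro exI[of _ "[i, j]"]) auto
qed

lemma vcontains_3_21_nth_iff:
  "vcontains s pat_3_21 \<longleftrightarrow> (\<exists>i j. i < j \<and> Suc j < length s \<and> s ! j < s ! i \<and> s ! Suc j < s ! j)"
proof
  assume "vcontains s pat_3_21"
  then obtain i j k where ijk: "i < j" "j < k" "k < length s" "k = Suc j"
      "same_order [s ! i, s ! j, s ! k] [3, 2, 1]"
    by (auto simp: vcontains_def pat_3_21_def length_Suc_conv numeral_3_eq_3)
  then have "s ! j < s ! i" "s ! k < s ! j"
    by (simp_all add: same_order_def All_less_Suc)
  with ijk show "\<exists>i j. i < j \<and> Suc j < length s \<and> s ! j < s ! i \<and> s ! Suc j < s ! j"
    by blast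
next
  assume "\<exists>i j. i < j \<and> Suc j < length s \<and> s ! j < s ! i \<and> s ! Suc j < s ! j"
  then obtain i j where ij: "i < j" "Suc j < length s" "s ! j < s ! i" "s ! Suc j < s ! j"
    by blast
  then have "same_order [s ! i, s ! j, s ! Suc j] [3, 2, 1]"
    by (simp add: same_order_def All_less_Suc)
  with ij show "vcontains s pat_3_21"
    unfolding vcontains_def pat_3_21_def by (intro exI[of _ "[i, j, Suc j]"]) simp
qed

lemma vcontains_3_21_iff:
  "vcontains s pat_3_21 \<longleftrightarrow> (\<exists>u v x y z. s = u @ [y, x] @ v \<and> z \<in> set u \<and> x < y \<and> y < z)"
proof
  assume "vcontains s pat_3_21"
  then obtain i j where ij: "i < j" "Suc j < length s" "s ! j < s ! i" "s ! Suc j < s ! j"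
    unfolding vcontains_3_21_nth_iff by blast
  then have "s = take j s @ [s ! j, s ! Suc j] @ drop (Suc (Suc j)) s"
    by (simp add: Cons_nth_drop_Suc)
  moreover have "s ! i \<in> set (take j s)"
    using ij nth_mem[of i "take j s"] by simp
  ultimately show "\<exists>u v x y z. s = u @ [y, x] @ v \<and> z \<in> set u \<and> x < y \<and> y < z"
    using ij by blast
next
  assume "\<exists>u v x y z. s = u @ [y, x] @ v \<and> z \<in> set u \<and> x < y \<and> y < z"
  then obtain u v x y i where "s = u @ [y, x] @ v" "i < length u" "x < y" "y < u ! i"
    by (auto simp: in_set_conv_nth)
  then show "vcontains s pat_3_21"
    unfolding vcontains_3_21_nth_iff by (intro exI[of _ i] exI[of _ "length u"]) (auto simp: nth_append)
qed

lemma vcontains_3_21_Cons_iff: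
  "vcontains (x # s) pat_3_21 \<longleftrightarrow>
     vcontains s pat_3_21 \<or> (\<exists>u v a b. s = u @ [b, a] @ v \<and> a < b \<and> b < x)"
proof
  assume "vcontains (x # s) pat_3_21"
  then obtain u v a b z where "x # s = u @ [b, a] @ v" "z \<in> set u" "a < b" "b < z"
    unfolding vcontains_3_21_iff by blast
  then obtain u' where "u = x # u'" "s = u' @ [b, a] @ v" "z = x \<or> z \<in> set u'" "a < b" "b < z"
    by (cases u) auto
  then show "vcontains s pat_3_21 \<or> (\<exists>u v a b. s = u @ [b, a] @ v \<and> a < b \<and> b < x)"
    unfolding vcontains_3_21_iff by blast
next
  assume "vcontains s pat_3_21 \<or> (\<exists>u v a b. s = u @ [b, a] @ v \<and> a < b \<and> b < x)"
  then obtain u v a b z where "s = u @ [b, a] @ v" "z \<in> set (x # u)" "a < b" "b < z"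
    unfolding vcontains_3_21_iff by (metis list.set_intros)
  then have "x # s = (x # u) @ [b, a] @ v"
    by simp
  with \<open>z \<in> set (x # u)\<close> \<open>a < b\<close> \<open>b < z\<close> show "vcontains (x # s) pat_3_21"
    unfolding vcontains_3_21_iff by blast
qed

lemma vcontains_3_21_iff_has_12_3_rev: "vcontains s pat_3_21 \<longleftrightarrow> has_12_3 (rev s)"
proof
  assume "vcontains s pat_3_21"
  then obtain u v x y z where "s = u @ [y, x] @ v" "z \<in> set u" "x < y" "y < z"
    unfolding vcontains_3_21_iff by blast
  then have "rev s = rev v @ [x, y] @ rev u" "z \<in> set (rev u)" "x < y" "y < z"
    by simp_all
  then show "has_12_3 (rev s)"
    unfolding has_12_3_def by blast
next
  assume "has_12_3 (rev s)"
  then obtain u v x y z where "rev s = u @ [x, y] @ v" "z \<in> set v" "x < y" "y < z"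
    unfolding has_12_3_def by blast
  then have "s = rev v @ [y, x] @ rev u" "z \<in> set (rev v)" "x < y" "y < z"
    by (simp_all add: rev_swap)
  then show "vcontains s pat_3_21"
    unfolding vcontains_3_21_iff by blast
qed

lemma has_12_3_append: "has_12_3 w \<Longrightarrow> has_12_3 (w @ w')"
  unfolding has_12_3_def by fastforce

section \<open>The pattern-avoiding stack machine\<close>

lemma sc_run_eq_append_perm:
  "\<exists>r. sc_run \<sigma> xs st out = out @ r \<and> mset r = mset xs + mset st"
proof (induction \<sigma> xs st out rule: sc_run.induct)
  case (3 \<sigma> x xs y st out)
  show ?case
  proof (cases "vcontains (x # y # st) \<sigma>")
    case True
    with "3.IH"(2) obtain r where
      "sc_run \<sigma> (x # xs) st (out @ [y]) = out @ y # r" "mset r = mset (x # xs) + mset st"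
      by auto
    with True show ?thesis
      by (intro exI[of _ "y # r"]) simp
  qed (use "3.IH"(1) in auto)
qed auto

lemma mset_SC: "mset (SC \<sigma> \<tau>) = mset \<tau>"
  using sc_run_eq_append_perm[of \<sigma> \<tau> "[]" "[]"] by (auto simp: SC_def)

lemma sc_run_keeps_stack_pair:
  "subseq [p, q] st \<Longrightarrow> \<exists>r. sc_run \<sigma> xs st out = out @ r \<and> subseq [p, q] r"
proof (induction \<sigma> xs st out rule: sc_run.induct)
  case (3 \<sigma> x xs y st out)
  show ?case
  proof (cases "vcontains (x # y # st) \<sigma>")
    case pop: True
    show ?thesis
    proof (cases "p = y")
      case True
      obtain r where r: "sc_run \<sigma> (x # xs) st (out @ [y]) = out @ y # r"
          "mset r = mset (x # xs) + mset st"
        using sc_run_eq_append_perm[of \<sigma> "x # xs" st "out @ [y]"] by auto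
      from "3.prems" True have "q \<in> set st"
        by (simp add: subseq_singleton_left)
      then have "q \<in> set r"
        using r(2) by (metis Un_iff set_mset_mset set_mset_union)
      with pop True r(1) show ?thesis
        by (intro exI[of _ "y # r"]) (simp add: subseq_singleton_left)
    next
      case False
      with "3.IH"(2) "3.prems" pop obtain r where "sc_run \<sigma> (x # xs) st (out @ [y]) = out @ y # r" "subseq [p, q] r"
        by auto
      with pop show ?thesis
        by (intro exI[of _ "y # r"]) (auto dest: subseq_Cons')
    qed
  next
    case False
    have "subseq [p, q] (x # y # st)"
      using "3.prems" by (rule list_emb_Cons)
    with "3.IH"(1) False show ?thesis
      by simp
  qed
qed auto

section \<open>The machine avoiding 3-21\<close>

lemma sc_run_3_21_no_pop:
  "\<not> has_12_3 (rev st @ xs) \<Longrightarrow> sc_run pat_3_21 xs st out = out @ rev xs @ st"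
proof (induction pat_3_21 xs st out rule: sc_run.induct)
  case (3 x xs y st out)
  have "\<not> vcontains (x # y # st) pat_3_21"
  proof
    assume "vcontains (x # y # st) pat_3_21"
    then have "has_12_3 (rev (x # y # st) @ xs)"
      by (simp only: vcontains_3_21_iff_has_12_3_rev has_12_3_append)
    with "3.prems" show False
      by simp
  qed
  with 3 show ?case
    by simp
qed simp_all

lemma sc_run_3_21_blocked_has_231:
  assumes "\<not> vcontains st pat_3_21" and "st = u @ [b, a] @ v" and "a < b" and "b < x"
  shows "has_231 (sc_run pat_3_21 (x # xs) st out)"
  using assms
proof (induction st arbitrary: u b a v out)
  case (Cons y st)
  have "vcontains (x # y # st) pat_3_21"
    using Cons.prems(2-4) unfolding vcontains_3_21_Cons_iff by blast
  then have pop: "sc_run pat_3_21 (x # xs) (y # st) out = sc_run pat_3_21 (x # xs) st (out @ [y])"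
    by simp
  have st: "\<not> vcontains st pat_3_21"
    using Cons.prems(1) by (simp add: vcontains_3_21_Cons_iff)
  show ?case
  proof (cases "\<exists>u' b' a' v'. st = u' @ [b', a'] @ v' \<and> a' < b' \<and> b' < x")
    case True
    with Cons.IH st pop show ?thesis
      by metis
  next
    case False
    txt \<open>No deeper descent blocks \<open>x\<close>: once \<open>b\<close> is popped, \<open>x\<close> is pushed onto \<open>a\<close>,
      so \<open>b\<close>, \<open>x\<close>, \<open>a\<close> are output in this order.\<close>
    with Cons.prems(2-4) have "y = b" "st = a # v"
      by (cases u; fastforce)+
    from False st have "\<not> vcontains (x # st) pat_3_21"
      unfolding vcontains_3_21_Cons_iff by blast
    then have push: "sc_run pat_3_21 (x # xs) st (out @ [b]) = sc_run pat_3_21 xs (x # a # v) (out @ [b])"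
      using \<open>st = a # v\<close> by simp
    obtain r where "sc_run pat_3_21 xs (x # a # v) (out @ [b]) = out @ b # r" "subseq [x, a] r"
      using sc_run_keeps_stack_pair[of x a "x # a # v" pat_3_21 xs "out @ [b]"] by auto
    then have "subseq [b, x, a] (sc_run pat_3_21 (x # xs) (y # st) out)"
      using pop push \<open>y = b\<close> by (simp add: list_emb_append2)
    with Cons.prems(3,4) show ?thesis
      unfolding has_231_def by blast
  qed
qed simp

lemma sc_run_3_21_has_231:
  "\<not> vcontains st pat_3_21 \<Longrightarrow> has_12_3 (rev st @ xs) \<Longrightarrow> has_231 (sc_run pat_3_21 xs st out)"
proof (induction pat_3_21 xs st out rule: sc_run.induct)
  case (1 st out)
  then show ?case
    by (simp add: vcontains_3_21_iff_has_12_3_rev)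
next
  case (2 x xs out)
  have "\<not> vcontains [x] pat_3_21"
    by (simp add: vcontains_3_21_nth_iff)
  with 2 show ?case
    by simp
next
  case (3 x xs y st out)
  show ?case
  proof (cases "vcontains (x # y # st) pat_3_21")
    case True
    with "3.prems"(1) obtain u b a v where "y # st = u @ [b, a] @ v" "a < b" "b < x"
      by (auto simp: vcontains_3_21_Cons_iff)
    with "3.prems"(1) show ?thesis
      by (rule sc_run_3_21_blocked_has_231)
  qed (use 3 in simp)
qed

lemma SC_3_21_eq_rev: "\<not> has_12_3 \<pi> \<Longrightarrow> SC pat_3_21 \<pi> = rev \<pi>"
  using sc_run_3_21_no_pop[of "[]" \<pi> "[]"] by (simp add: SC_def)

lemma has_231_SC_3_21: "has_12_3 \<pi> \<Longrightarrow> has_231 (SC pat_3_21 \<pi>)"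
  using sc_run_3_21_has_231[of "[]" \<pi> "[]"] by (simp add: SC_def vcontains_3_21_nth_iff)

section \<open>West's stack-sorting map\<close>

lemma has_231_subseq: "has_231 w \<Longrightarrow> subseq w w' \<Longrightarrow> has_231 w'"
  unfolding has_231_def using subseq_order.order_trans by blast

lemma sc_run_21_sorted:
  "sorted out \<Longrightarrow> sorted st \<Longrightarrow> \<forall>e\<in>set out. \<forall>v\<in>set st \<union> set xs. e \<le> v \<Longrightarrow>
    \<not> has_231 (rev st @ xs) \<Longrightarrow> sorted (sc_run pat_21 xs st out)"
proof (induction pat_21 xs st out rule: sc_run.induct)
  case (1 st out)
  then show ?case
    by (auto simp: sorted_append)
next
  case (3 x xs y st out)
  show ?case
  proof (cases "y < x")
    case True
    have "y \<le> v" if "v \<in> set xs" for v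
    proof (rule ccontr)
      assume "\<not> y \<le> v"
      have "subseq [y, x, v] (rev (y # st) @ x # xs)"
        using that by (simp add: subseq_singleton_left list_emb_append2)
      with True \<open>\<not> y \<le> v\<close> have "has_231 (rev (y # st) @ x # xs)"
        unfolding has_231_def by force
      with "3.prems"(4) show False
        by contradiction
    qed
    with True "3.prems"(1-3) have "\<forall>e\<in>set (out @ [y]). \<forall>v\<in>set st \<union> set (x # xs). e \<le> v"
      by fastforce
    moreover have "sorted (out @ [y])"
      using "3.prems"(1,3) by (auto simp: sorted_append)
    moreover have "subseq (rev st @ x # xs) (rev (y # st) @ x # xs)"
      by (simp only: rev.simps append_assoc append.simps subseq_append' list_emb_Cons subseq_order.order_refl)
    then have "\<not> has_231 (rev st @ x # xs)"
      using "3.prems"(4) has_231_subseq by blast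
    moreover have "vcontains (x # y # st) pat_21"
      using True by (simp add: vcontains_21_iff_not_sorted)
    ultimately show ?thesis
      using "3.hyps"(2) "3.prems"(2) by simp
  next
    case False
    with "3.prems"(2) have "sorted (x # y # st)"
      unfolding sorted2 by simp
    with "3.hyps"(1) "3.prems"(1,3,4) show ?thesis
      by (simp add: vcontains_21_iff_not_sorted)
  qed
qed simp

text \<open>\<open>b\<close> has to leave the stack before \<open>c\<close> can be pushed, and then \<open>a\<close> is still
  in the input.\<close>
lemma sc_run_21_stack_inversion:
  "b \<in> set st \<Longrightarrow> subseq [c, a] xs \<Longrightarrow> a < b \<Longrightarrow> b < c \<Longrightarrow>
    subseq [b, a] (sc_run pat_21 xs st out)"
proof (induction pat_21 xs st out rule: sc_run.induct)
  case (3 x xs y st out)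
  show ?case
  proof (cases "vcontains (x # y # st) pat_21")
    case False
    with "3.prems"(1,4) have "x \<noteq> c"
      by (auto simp: vcontains_21_iff_not_sorted)
    with "3.hyps"(1) "3.prems" False show ?thesis
      by simp
  next
    case pop: True
    show ?thesis
    proof (cases "y = b")
      case True
      obtain r where r: "sc_run pat_21 (x # xs) st (out @ [y]) = out @ y # r"
          "mset r = mset (x # xs) + mset st"
        using sc_run_eq_append_perm[of pat_21 "x # xs" st "out @ [y]"] by auto
      from "3.prems"(2) have "a \<in> set (x # xs)"
        using subseq_Cons' subseq_singleton_left by metis
      with r(2) have "a \<in> set r"
        by (metis Un_iff set_mset_mset set_mset_union)
      with pop True r(1) show ?thesis
        by (simp add: subseq_singleton_left list_emb_append2)
    next
      case False
      with "3.hyps"(2) "3.prems" pop show ?thesis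
        by simp
    qed
  qed
qed simp_all

lemma sc_run_21_input_inversion:
  "subseq [b, c, a] xs \<Longrightarrow> a < b \<Longrightarrow> b < c \<Longrightarrow> subseq [b, a] (sc_run pat_21 xs st out)"
proof (induction pat_21 xs st out rule: sc_run.induct)
  case (2 x xs out)
  then show ?case
    by (cases "x = b") (simp_all add: sc_run_21_stack_inversion)
next
  case (3 x xs y st out)
  then show ?case
    by (cases "x = b") (simp_all add: sc_run_21_stack_inversion)
qed simp

lemma west_s_eq_sc_run_21: "west_s w = sc_run pat_21 w [] []"
  by (simp add: west_s_def pat_21_def SC_def)

lemma sorted_west_s_iff: "sorted (west_s w) \<longleftrightarrow> \<not> has_231 w"
proof
  assume sorted: "sorted (west_s w)"
  show "\<not> has_231 w"
  proof
    assume "has_231 w"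
    then obtain a b c where "subseq [b, c, a] w" "a < b" "b < c"
      unfolding has_231_def by blast
    then have "subseq [b, a] (west_s w)"
      unfolding west_s_eq_sc_run_21 by (rule sc_run_21_input_inversion)
    with sorted have "b \<le> a"
      by (rule sorted_subseq_pair)
    with \<open>a < b\<close> show False
      by simp
  qed
next
  assume "\<not> has_231 w"
  then show "sorted (west_s w)"
    unfolding west_s_eq_sc_run_21 by (intro sc_run_21_sorted) auto
qed

section \<open>Avoidance of 123 and 132\<close>

lemma adjacent_ascent_if_hd_less_last:
  fixes w :: "'a::linorder list"
  shows "w \<noteq> [] \<Longrightarrow> hd w < last w \<Longrightarrow> \<exists>u v x y. w = u @ [x, y] @ v \<and> x < y"
proof (induction w)
  case (Cons a w)
  show ?case
  proof (cases "w \<noteq> [] \<and> a < hd w")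
    case True
    then have "a # w = [] @ [a, hd w] @ tl w"
      by simp
    with True show ?thesis
      by blast
  next
    case False
    with Cons.prems have "w \<noteq> []" "hd w < last w"
      by (auto split: if_splits simp: not_less)
    with Cons.IH obtain u v x y where "w = u @ [x, y] @ v" "x < y"
      by blast
    then have "a # w = (a # u) @ [x, y] @ v" "x < y"
      by simp_all
    then show ?thesis
      by blast
  qed
qed simp

lemma has_231_rev_if_132:
  assumes "subseq [a, c, b] \<pi>" and "a < b" and "b < c"
  shows "has_231 (rev \<pi>)"
proof -
  have "subseq [b, c, a] (rev \<pi>)"
    using subseq_rev[OF assms(1)] by simp
  with assms(2,3) show ?thesis
    unfolding has_231_def by blast
qed

lemma has_231_rev_if_not_avoids_123_132:
  assumes "distinct \<pi>" and "\<not> has_12_3 \<pi>" and "\<not> avoids_123_132 \<pi>"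
  shows "has_231 (rev \<pi>)"
proof -
  from assms(3) obtain a b c where abc: "subseq [a, b, c] \<pi>" "a < b" "a < c"
    unfolding avoids_123_132_def by blast
  then obtain p q r s where \<pi>: "\<pi> = p @ a # q @ b # r @ c # s"
    by (auto simp: subseq_triple_iff)
  show ?thesis
  proof (cases "c < b")
    case True
    with abc show ?thesis
      by (blast intro: has_231_rev_if_132)
  next
    case False
    txt \<open>Some adjacent ascent \<open>x y\<close> lies between \<open>a\<close> and \<open>b\<close>; then \<open>x y c\<close> is a
      12-3 if \<open>y < c\<close>, and \<open>a y c\<close> is a 132 otherwise.\<close>
    obtain u v x y where xy: "a # q @ [b] = u @ [x, y] @ v" "x < y"
      using adjacent_ascent_if_hd_less_last[of "a # q @ [b]"] abc(2) by auto
    have "y \<in> set (q @ [b])"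
      using xy(1) by (cases u) auto
    then obtain q1 q2 where "q @ [b] = q1 @ y # q2"
      by (meson split_list)
    moreover have \<pi>_split: "\<pi> = p @ (a # q @ [b]) @ r @ c # s"
      using \<pi> by simp
    ultimately have "\<pi> = p @ a # q1 @ y # (q2 @ r) @ c # s"
      by simp
    then have "subseq [a, y, c] \<pi>"
      unfolding subseq_triple_iff by blast
    from \<pi>_split xy(1) have \<pi>': "\<pi> = (p @ u) @ [x, y] @ (v @ r @ c # s)"
      by simp
    show ?thesis
    proof (cases "y < c")
      case True
      with \<pi>' xy(2) have "has_12_3 \<pi>"
        unfolding has_12_3_def by fastforce
      with assms(2) show ?thesis
        by contradiction
    next
      case False
      have "c \<notin> set (q @ [b])"
        using assms(1) \<pi> by auto
      with False \<open>y \<in> set (q @ [b])\<close> have "c < y"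
        by (metis linorder_neqE_nat)
      with \<open>subseq [a, y, c] \<pi>\<close> abc(3) show ?thesis
        by (rule has_231_rev_if_132)
    qed
  qed
qed

lemma avoids_123_132_imp_not_has_12_3:
  assumes "avoids_123_132 \<pi>"
  shows "\<not> has_12_3 \<pi>"
proof
  assume "has_12_3 \<pi>"
  then obtain u v x y z where "\<pi> = u @ [x, y] @ v" "z \<in> set v" "x < y" "y < z"
    unfolding has_12_3_def by blast
  moreover from \<open>z \<in> set v\<close> obtain v1 v2 where "v = v1 @ z # v2"
    by (meson split_list)
  ultimately have "\<pi> = u @ x # [] @ y # v1 @ z # v2"
    by simp
  then have "subseq [x, y, z] \<pi>"
    unfolding subseq_triple_iff by blast
  with \<open>x < y\<close> \<open>y < z\<close> assms show False
    unfolding avoids_123_132_def using less_trans by blast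
qed

lemma avoids_123_132_imp_not_has_231_rev:
  assumes "avoids_123_132 \<pi>"
  shows "\<not> has_231 (rev \<pi>)"
proof
  assume "has_231 (rev \<pi>)"
  then obtain a b c where "subseq [b, c, a] (rev \<pi>)" "a < b" "b < c"
    unfolding has_231_def by blast
  then have "subseq [a, c, b] \<pi>" "a < c" "a < b"
    using subseq_rev[of "[b, c, a]" "rev \<pi>"] by auto
  with assms show False
    unfolding avoids_123_132_def by blast
qed

lemma avoids_123_132_iff_SC_3_21:
  assumes "distinct \<pi>"
  shows "avoids_123_132 \<pi> \<longleftrightarrow> \<not> has_231 (SC pat_3_21 \<pi>)"
proof
  assume "avoids_123_132 \<pi>"
  then show "\<not> has_231 (SC pat_3_21 \<pi>)"
    by (simp add: SC_3_21_eq_rev avoids_123_132_imp_not_has_12_3 avoids_123_132_imp_not_has_231_rev)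
next
  assume sortable: "\<not> has_231 (SC pat_3_21 \<pi>)"
  then have "\<not> has_12_3 \<pi>"
    using has_231_SC_3_21 by blast
  moreover from sortable this have "\<not> has_231 (rev \<pi>)"
    by (simp add: SC_3_21_eq_rev)
  ultimately show "avoids_123_132 \<pi>"
    using has_231_rev_if_not_avoids_123_132 assms by blast
qed

lemma avoids_123_132_contains:
  assumes "contains \<pi> \<tau>" and "avoids_123_132 \<pi>"
  shows "avoids_123_132 \<tau>"
  unfolding avoids_123_132_def
proof
  assume "\<exists>a b c. subseq [a, b, c] \<tau> \<and> a < b \<and> a < c"
  then obtain i j k where ijk: "i < j" "j < k" "k < length \<tau>" "\<tau> ! i < \<tau> ! j" "\<tau> ! i < \<tau> ! k"
    by (metis subseq_triple_nth)
  from assms(1) obtain ys where "subseq ys \<pi>" "same_order ys \<tau>"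
    unfolding contains_def by blast
  with ijk have "subseq [ys ! i, ys ! j, ys ! k] \<pi>" "ys ! i < ys ! j" "ys ! i < ys ! k"
    using nth_subseq_triple[of i j k ys] subseq_order.order_trans by (auto simp: same_order_def)
  with assms(2) show False
    unfolding avoids_123_132_def by blast
qed

lemma eq_upt_iff_sorted:
  assumes "is_perm \<pi>" and "mset w = mset \<pi>"
  shows "w = [1..<Suc (length \<pi>)] \<longleftrightarrow> sorted w"
proof
  assume "sorted w"
  have "distinct w"
    using assms(1) mset_eq_imp_distinct_iff[OF assms(2)] unfolding is_perm_def by simp
  have "set w = set \<pi>"
    using assms(2) by (rule mset_eq_setD)
  also have "\<dots> = set [1..<Suc (length \<pi>)]"
    using assms(1) unfolding is_perm_def by (simp only: set_upt atLeastLessThanSuc_atLeastAtMost)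
  finally show "w = [1..<Suc (length \<pi>)]"
    by (rule sorted_distinct_set_unique[OF \<open>sorted w\<close> \<open>distinct w\<close> sorted_upt distinct_upt])
qed (simp del: upt_Suc)

lemma Sort_iff: "\<pi> \<in> Sort \<sigma> \<longleftrightarrow> is_perm \<pi> \<and> \<pi> \<noteq> [] \<and> sorted (west_s (SC \<sigma> \<pi>))"
proof -
  have "\<pi> \<in> Sort \<sigma> \<longleftrightarrow> is_perm \<pi> \<and> \<pi> \<noteq> [] \<and> west_s (SC \<sigma> \<pi>) = [1..<Suc (length \<pi>)]"
    unfolding Sort_def Sort_n_def perms_def by (auto simp: Suc_le_eq)
  moreover have "mset (west_s (SC \<sigma> \<pi>)) = mset \<pi>"
    by (simp add: west_s_def mset_SC)
  ultimately show ?thesis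
    using eq_upt_iff_sorted by blast
qed

lemma Sort_3_21_eq: "Sort pat_3_21 = {\<pi>. is_perm \<pi> \<and> \<pi> \<noteq> [] \<and> avoids_123_132 \<pi>}"
  by (auto simp: Sort_iff sorted_west_s_iff avoids_123_132_iff_SC_3_21 is_perm_def)

theorem mainTheorem16:
  shows "perm_class (Sort pat_3_21)"
  unfolding perm_class_def Sort_3_21_eq using avoids_123_132_contains by blast

end
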